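(* Let $N\ge 2$, $a\in\mathbb{R}^N$ with all $a_i\neq 0$, $\underline x<\overline x$, $\underline y<\overline y$ in $\mathbb{R}^N$, and $\mathcal{S}_a=\{(x,y)\in\mathbb{R}^N\times\mathbb{R}^N: \sum_{i=1}^N a_ix_iy_i=0,\ \underline x\le x\le\overline x,\ \underline y\le y\le\overline y\}$. Let $(x,y)$ be an extreme point of $\mathcal{S}_a$ and let $i\neq j$. Then either both $x_i\in\{\underline x_i,\overline x_i\}$ and $y_i\in\{\underline y_i,\overline y_i\}$, or both $x_j\in\{\underline x_j,\overline x_j\}$ and $y_j\in\{\underline y_j,\overline y_j\}$. *)

theory Defs
  imports "HOL-Analysis.Analysis"
begin

definition S_set :: "real^'n \<Rightarrow> real^'n \<Rightarrow> real^'n \<Rightarrow> real^'n \<Rightarrow> real^'n \<Rightarrow> ((real^'n) \<times> (real^'n)) set" where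
  "S_set a xl xu yl yu = {(x, y). (\<Sum>i\<in>UNIV. a$i * x$i * y$i) = 0 \<and>
      (\<forall>i. xl$i \<le> x$i \<and> x$i \<le> xu$i) \<and> (\<forall>i. yl$i \<le> y$i \<and> y$i \<le> yu$i)}"

end

theory Submission
  imports Defs
begin

text \<open>Suppose that at both indices \<open>i\<close> and \<open>j\<close> one of the two coordinates is strictly inside its
  interval. Move only that free coordinate at \<open>i\<close> and at \<open>j\<close>. Since at each index at most one
  factor of \<open>a\<^sub>k x\<^sub>k y\<^sub>k\<close> moves, the constraint is affine along such a line, so it is one linear
  equation in the two step sizes and has a nonzero solution. Small steps in both directions along
  it stay in \<open>S\<^sub>a\<close>, so \<open>(x, y)\<close> is the midpoint of two distinct points of \<open>S\<^sub>a\<close>.\<close>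

lemma extreme_point_symmetric_perturbation_eq_0:
  fixes p d :: "'a::real_vector"
  assumes "p extreme_point_of S" "p + d \<in> S" "p - d \<in> S"
  shows "d = 0"
proof (rule ccontr)
  assume "d \<noteq> 0"
  moreover have "(p + d) - (p - d) = 2 *\<^sub>R d"
    by (simp add: scaleR_2)
  ultimately have "p + d \<noteq> p - d"
    by (metis diff_self scaleR_eq_0_iff zero_neq_numeral)
  moreover have "midpoint (p + d) (p - d) = p"
    by (simp add: midpoint_eq_iff algebra_simps)
  ultimately have "p \<in> open_segment (p + d) (p - d)"
    by (metis midpoint_in_open_segment)
  with assms show False
    by (auto simp: extreme_point_of_def)
qed

lemma eventually_perturbation_in_interval:
  fixes l z h d :: real
  assumes "l \<le> z" "z \<le> h" "d \<noteq> 0 \<Longrightarrow> l < z \<and> z < h"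
  shows "\<forall>\<^sub>F t in at_right 0. l \<le> z + t * d \<and> z + t * d \<le> h"
proof (cases "d = 0")
  case True
  with assms show ?thesis by simp
next
  case False
  with assms have "l < z" "z < h" by auto
  have lim: "((\<lambda>t. z + t * d) \<longlongrightarrow> z) (at_right 0)"
    by (auto intro!: tendsto_eq_intros)
  show ?thesis
    using order_tendstoD(1)[OF lim \<open>l < z\<close>] order_tendstoD(2)[OF lim \<open>z < h\<close>]
    by eventually_elim auto
qed

lemma eventually_perturbation_in_box:
  fixes l z h d :: "real^'n"
  assumes "z \<in> cbox l h" "\<forall>k. d$k \<noteq> 0 \<longrightarrow> l$k < z$k \<and> z$k < h$k"
  shows "\<forall>\<^sub>F t in at_right 0. z + t *\<^sub>R d \<in> cbox l h \<and> z - t *\<^sub>R d \<in> cbox l h"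
proof -
  have "\<forall>\<^sub>F t in at_right 0. \<forall>k. (l$k \<le> z$k + t * d$k \<and> z$k + t * d$k \<le> h$k)
                                 \<and> (l$k \<le> z$k + t * - d$k \<and> z$k + t * - d$k \<le> h$k)"
  proof (rule eventually_all_finite)
    fix k
    have "l$k \<le> z$k" "z$k \<le> h$k"
      using assms(1) by (auto simp: mem_box_cart)
    then show "\<forall>\<^sub>F t in at_right 0. (l$k \<le> z$k + t * d$k \<and> z$k + t * d$k \<le> h$k)
                                 \<and> (l$k \<le> z$k + t * - d$k \<and> z$k + t * - d$k \<le> h$k)"
      using assms(2) by (intro eventually_conj eventually_perturbation_in_interval) auto
  qed
  then show ?thesis
    by (simp add: mem_box_cart all_conj_distrib)
qed

lemma weighted_product_sum_along_complementary_directions: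
  fixes a x y dx dy :: "real^'n"
  assumes "\<forall>k. dx$k * dy$k = 0"
  shows "(\<Sum>k\<in>UNIV. a$k * (x + s *\<^sub>R dx)$k * (y + s *\<^sub>R dy)$k)
       = (\<Sum>k\<in>UNIV. a$k * x$k * y$k) + s * (\<Sum>k\<in>UNIV. a$k * (x$k * dy$k + dx$k * y$k))"
proof -
  have "(\<Sum>k\<in>UNIV. a$k * (x + s *\<^sub>R dx)$k * (y + s *\<^sub>R dy)$k)
      = (\<Sum>k\<in>UNIV. a$k * x$k * y$k + s * (a$k * (x$k * dy$k + dx$k * y$k))
                      + s\<^sup>2 * a$k * (dx$k * dy$k))"
    by (rule sum.cong) (simp_all add: algebra_simps power2_eq_square)
  also have "\<dots> = (\<Sum>k\<in>UNIV. a$k * x$k * y$k) + s * (\<Sum>k\<in>UNIV. a$k * (x$k * dy$k + dx$k * y$k))"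
    by (simp add: assms[rule_format] sum.distrib sum_distrib_left)
  finally show ?thesis .
qed

lemma extreme_point_of_S_set_no_free_direction:
  fixes a xl xu yl yu x y dx dy :: "real^'n"
  assumes extreme: "(x, y) extreme_point_of S_set a xl xu yl yu"
    and complementary: "\<forall>k. dx$k * dy$k = 0"
    and tangent: "(\<Sum>k\<in>UNIV. a$k * (x$k * dy$k + dx$k * y$k)) = 0"
    and free_x: "\<forall>k. dx$k \<noteq> 0 \<longrightarrow> xl$k < x$k \<and> x$k < xu$k"
    and free_y: "\<forall>k. dy$k \<noteq> 0 \<longrightarrow> yl$k < y$k \<and> y$k < yu$k"
  shows "dx = 0 \<and> dy = 0"
proof -
  have S_set_eq: "S_set a xl xu yl yu
      = {(x, y). (\<Sum>k\<in>UNIV. a$k * x$k * y$k) = 0 \<and> x \<in> cbox xl xu \<and> y \<in> cbox yl yu}"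
    by (auto simp: S_set_def mem_box_cart)
  have "(x, y) \<in> S_set a xl xu yl yu"
    using extreme by (simp add: extreme_point_of_def)
  then have zero: "(\<Sum>k\<in>UNIV. a$k * x$k * y$k) = 0" and box: "x \<in> cbox xl xu" "y \<in> cbox yl yu"
    by (auto simp: S_set_eq)
  have "\<forall>\<^sub>F t in at_right 0. 0 < t
      \<and> x + t *\<^sub>R dx \<in> cbox xl xu \<and> x - t *\<^sub>R dx \<in> cbox xl xu
      \<and> y + t *\<^sub>R dy \<in> cbox yl yu \<and> y - t *\<^sub>R dy \<in> cbox yl yu"
    using eventually_at_right_less[of 0]
      eventually_perturbation_in_box[OF box(1) free_x] eventually_perturbation_in_box[OF box(2) free_y]
    by eventually_elim auto
  then obtain t where t: "0 < t" "x + t *\<^sub>R dx \<in> cbox xl xu" "x - t *\<^sub>R dx \<in> cbox xl xu"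
      "y + t *\<^sub>R dy \<in> cbox yl yu" "y - t *\<^sub>R dy \<in> cbox yl yu"
    by (metis (no_types, lifting) eventually_happens' trivial_limit_at_right_real)
  have "(x, y) + t *\<^sub>R (dx, dy) \<in> S_set a xl xu yl yu"
    using t weighted_product_sum_along_complementary_directions[OF complementary, where s = t]
    by (simp add: S_set_eq zero tangent)
  moreover have "(x, y) - t *\<^sub>R (dx, dy) \<in> S_set a xl xu yl yu"
    using t weighted_product_sum_along_complementary_directions[OF complementary, where s = "- t"]
    by (simp add: S_set_eq zero tangent)
  ultimately have "t *\<^sub>R (dx, dy) = 0"
    by (rule extreme_point_symmetric_perturbation_eq_0[OF extreme])
  with t(1) show ?thesis
    by (simp add: zero_prod_def)
qed

lemma extreme_point_of_S_set_two_free_indices: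
  fixes a xl xu yl yu x y :: "real^'n"
  assumes extreme: "(x, y) extreme_point_of S_set a xl xu yl yu"
    and "i \<noteq> j"
    and free_i: "xl$i < x$i \<and> x$i < xu$i \<or> yl$i < y$i \<and> y$i < yu$i"
    and free_j: "xl$j < x$j \<and> x$j < xu$j \<or> yl$j < y$j \<and> y$j < yu$j"
  shows False
proof -
  define moves_x where "moves_x k \<longleftrightarrow> xl$k < x$k \<and> x$k < xu$k" for k
  define c where "c k = a$k * (if moves_x k then y$k else x$k)" for k
  obtain u v :: real where uv: "u \<noteq> 0 \<or> v \<noteq> 0" "u * c i + v * c j = 0"
  proof (cases "c i = 0 \<and> c j = 0")
    case True
    then show ?thesis using that[of 1 0] by simp
  next
    case False
    then show ?thesis using that[of "c j" "- c i"] by (auto simp: algebra_simps)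
  qed
  define step where "step k = (if k = i then u else if k = j then v else 0)" for k
  define dx :: "real^'n" where "dx = (\<chi> k. if moves_x k then step k else 0)"
  define dy :: "real^'n" where "dy = (\<chi> k. if moves_x k then 0 else step k)"
  have "dx = 0 \<and> dy = 0"
  proof (rule extreme_point_of_S_set_no_free_direction[OF extreme])
    show "\<forall>k. dx$k * dy$k = 0"
      by (simp add: dx_def dy_def)
    have "(\<Sum>k\<in>UNIV. a$k * (x$k * dy$k + dx$k * y$k))
        = (\<Sum>k\<in>UNIV. (if k = i then u * c i else 0) + (if k = j then v * c j else 0))"
      using \<open>i \<noteq> j\<close> by (intro sum.cong) (auto simp: dx_def dy_def c_def step_def)
    then show "(\<Sum>k\<in>UNIV. a$k * (x$k * dy$k + dx$k * y$k)) = 0"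
      using uv(2) by (simp add: sum.distrib)
    show "\<forall>k. dx$k \<noteq> 0 \<longrightarrow> xl$k < x$k \<and> x$k < xu$k"
      by (simp add: dx_def moves_x_def)
    show "\<forall>k. dy$k \<noteq> 0 \<longrightarrow> yl$k < y$k \<and> y$k < yu$k"
      using free_i free_j by (auto simp: dy_def step_def moves_x_def)
  qed
  moreover have "step k = (dx + dy)$k" for k
    by (simp add: dx_def dy_def)
  ultimately have "step k = 0" for k
    by (metis add_0 zero_index)
  from this[of i] this[of j] uv(1) \<open>i \<noteq> j\<close> show False
    by (simp add: step_def)
qed

theorem corollary1:
  fixes a xl xu yl yu x y :: "real^'n"
  assumes "CARD('n) \<ge> 2"
    and "\<forall>i. a$i \<noteq> 0"
    and "\<forall>i. xl$i < xu$i"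
    and "\<forall>i. yl$i < yu$i"
    and "(x, y) extreme_point_of S_set a xl xu yl yu"
    and "i \<noteq> j"
  shows "(x$i \<in> {xl$i, xu$i} \<and> y$i \<in> {yl$i, yu$i}) \<or>
         (x$j \<in> {xl$j, xu$j} \<and> y$j \<in> {yl$j, yu$j})"
proof (rule ccontr)
  assume pinned_neither: "\<not> ?thesis"
  have "xl$k \<le> x$k \<and> x$k \<le> xu$k \<and> yl$k \<le> y$k \<and> y$k \<le> yu$k" for k
    using assms(5) by (simp add: extreme_point_of_def S_set_def)
  with pinned_neither
  have "xl$i < x$i \<and> x$i < xu$i \<or> yl$i < y$i \<and> y$i < yu$i"
    and "xl$j < x$j \<and> x$j < xu$j \<or> yl$j < y$j \<and> y$j < yu$j"
    by (metis insertCI order_less_le)+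
  with assms(5,6) show False
    by (rule extreme_point_of_S_set_two_free_indices)
qed

end
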